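(* Let $S\subset\mathbb{R}^3$ be a surface foliated by circles (or arcs of circles) contained in planes parallel to the $xy$-plane, and let $\phi(x,y,z)=z$. Suppose that the $\phi$-mean curvature $H_\phi$ of $S$ is a nonzero constant. Then $S$ is a surface of revolution whose axis is parallel to the $z$-axis.
   Context: For a smooth oriented surface $S$ with unit normal $N=(N_1,N_2,N_3)$, $H$ is the mean curvature normalized so that the mean curvature vector is $\Delta_S X=2HN$. For the density $e^{\phi}$ with $\phi(x,y,z)=z$, the $\phi$-mean curvature is $H_\phi=H-\tfrac12\frac{d\phi}{dN}=H-\tfrac12 N_3$. Locally such an $S$ is parametrized as $X(s,t)=(a(s),b(s),s)+r(s)(\cos t,\sin t,0)$ with $a,b,r$ smooth, $r>0$, $t$ in an interval. The result is local. *)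

theory Defs
  imports "HOL-Analysis.Analysis" "HOL-Analysis.Cross3"
begin

definition smooth_on_real :: "real set \<Rightarrow> (real \<Rightarrow> real) \<Rightarrow> bool" where
  "smooth_on_real I f \<longleftrightarrow> (\<forall>n. \<forall>s\<in>I. ((deriv ^^ n) f) differentiable (at s))"

definition d_s :: "(real \<Rightarrow> real \<Rightarrow> real^3) \<Rightarrow> real \<Rightarrow> real \<Rightarrow> real^3" where
  "d_s X s t = vector_derivative (\<lambda>\<sigma>. X \<sigma> t) (at s)"

definition d_t :: "(real \<Rightarrow> real \<Rightarrow> real^3) \<Rightarrow> real \<Rightarrow> real \<Rightarrow> real^3" where
  "d_t X s t = vector_derivative (\<lambda>\<tau>. X s \<tau>) (at t)"

definition unit_normal :: "(real \<Rightarrow> real \<Rightarrow> real^3) \<Rightarrow> real \<Rightarrow> real \<Rightarrow> real^3" where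
  "unit_normal X s t = (1 / norm (cross3 (d_s X s t) (d_t X s t))) *\<^sub>R (cross3 (d_s X s t) (d_t X s t))"

text \<open>Mean curvature H = (eG - 2fF + gE) / (2(EG - F^2)), so that the mean
  curvature vector (Laplace-Beltrami of X) equals 2 H N.\<close>
definition mean_curv :: "(real \<Rightarrow> real \<Rightarrow> real^3) \<Rightarrow> real \<Rightarrow> real \<Rightarrow> real" where
  "mean_curv X s t =
    (let Xs = d_s X s t; Xt = d_t X s t; N = unit_normal X s t;
         E = Xs \<bullet> Xs; F = Xs \<bullet> Xt; G = Xt \<bullet> Xt;
         e = d_s (d_s X) s t \<bullet> N; f = d_t (d_s X) s t \<bullet> N; g = d_t (d_t X) s t \<bullet> N
     in (e * G - 2 * f * F + g * E) / (2 * (E * G - F\<^sup>2)))"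

text \<open>phi-mean curvature for the density e^phi with phi(x,y,z) = z:
  H_phi = H - (1/2) N_3.\<close>
definition phi_mean_curv :: "(real \<Rightarrow> real \<Rightarrow> real^3) \<Rightarrow> real \<Rightarrow> real \<Rightarrow> real" where
  "phi_mean_curv X s t = mean_curv X s t - (1/2) * (unit_normal X s t $ 3)"

end

theory Submission
  imports Defs "HOL-Computational_Algebra.Polynomial"
begin

(* Write A, B, R for a'(s), b'(s), r'(s), A2, B2, R2 for the second derivatives and
   q = A cos t + B sin t + R.  Computing the fundamental forms of X(s,t) gives
   2 r H_phi U^(3/2) = L, where U = 1 + q^2 and L is a cubic expression in (1, cos t, sin t).
   If H_phi = c <> 0 is constant, then L^2 = (2 c r)^2 U^3 for all t in the open set J.  The
   half-angle substitution (cos t, sin t) = (1 - x^2, 2x) / (1 + x^2) turns this into an identity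
   of polynomials in x, valid on an infinite set and hence in C[x].  Over C the polynomial U
   factors as (m + iQ)(m - iQ); if (A, B) <> (0, 0) the first factor has a simple root that is
   not a root of the second, so U has a root of order one, whereas L^2 = k U^3 forces every root
   of U to have even order.  Hence a' = b' = 0 on I: the centres of the circles lie on one
   vertical line, the axis of revolution. *)

(* The expressions L and U of the identity 2 r H_phi U^(3/2) = L, written homogeneously in
   (m, c, s) so that the same expressions serve for the point (1, cos t, sin t), for the
   half-angle point (1 + x^2, 1 - x^2, 2x), and for complex polynomials in x.  The arguments
   A, B, R, A2, B2, R2 stand for a', b', r', a'', b'', r'' and rho for r. *)
definition hphi_num :: "'a::comm_ring_1 \<Rightarrow> 'a \<Rightarrow> 'a \<Rightarrow> 'a \<Rightarrow> 'a \<Rightarrow> 'a \<Rightarrow> 'a \<Rightarrow> 'a \<Rightarrow> 'a \<Rightarrow> 'a \<Rightarrow> 'a" where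
  "hphi_num A B R A2 B2 R2 \<rho> m c s =
     (let q = A * c + B * s + R * m; p = B * c - A * s; M = A2 * c + B2 * s + R2 * m
      in m^3 + q^2 * m + p^2 * m - \<rho> * M * m^2 - \<rho> * q * (m^2 + q^2))"

definition hphi_den :: "'a::comm_ring_1 \<Rightarrow> 'a \<Rightarrow> 'a \<Rightarrow> 'a \<Rightarrow> 'a \<Rightarrow> 'a \<Rightarrow> 'a" where
  "hphi_den A B R m c s = m^2 + (A * c + B * s + R * m)^2"

lemma hphi_num_homogeneous:
  "hphi_num A B R A2 B2 R2 \<rho> (l * m) (l * c) (l * s) = l^3 * hphi_num A B R A2 B2 R2 \<rho> m c s"
  unfolding hphi_num_def Let_def by (simp add: algebra_simps power2_eq_square power3_eq_cube)

lemma hphi_den_homogeneous: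
  "hphi_den A B R (l * m) (l * c) (l * s) = l^2 * hphi_den A B R m c s"
  unfolding hphi_den_def by (simp add: algebra_simps power2_eq_square)

lemma hphi_den_nonneg: "hphi_den A B R m c s \<ge> (0::real)"
  unfolding hphi_den_def by simp

lemma hphi_den_factor:
  fixes j :: "'a::comm_ring_1"
  assumes "j^2 = -1"
  shows "hphi_den A B R m c s = (m + j * (A * c + B * s + R * m)) * (m - j * (A * c + B * s + R * m))"
proof -
  have "(m + j * q) * (m - j * q) = m^2 - j^2 * q^2" for q by (simp add: algebra_simps power2_eq_square)
  then show ?thesis unfolding hphi_den_def assms by simp
qed

lemma poly_hphi_num:
  "poly (hphi_num [:A:] [:B:] [:R:] [:A2:] [:B2:] [:R2:] [:\<rho>:] m c s) z =
   hphi_num A B R A2 B2 R2 \<rho> (poly m z) (poly c z) (poly s z)"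
  unfolding hphi_num_def Let_def by simp

lemma poly_hphi_den:
  "poly (hphi_den [:A:] [:B:] [:R:] m c s) z = hphi_den A B R (poly m z) (poly c z) (poly s z)"
  unfolding hphi_den_def by simp

lemma of_real_hphi_num:
  "of_real (hphi_num A B R A2 B2 R2 \<rho> m c s) =
   hphi_num (of_real A) (of_real B) (of_real R) (of_real A2) (of_real B2) (of_real R2) (of_real \<rho>)
     (of_real m) (of_real c) (of_real s)"
  unfolding hphi_num_def Let_def by simp

lemma of_real_hphi_den:
  "of_real (hphi_den A B R m c s) =
   hphi_den (of_real A) (of_real B) (of_real R) (of_real m) (of_real c) (of_real s)"
  unfolding hphi_den_def by simp

lemma vector3_has_vector_derivative:
  assumes "(f1 has_real_derivative d1) (at x)" "(f2 has_real_derivative d2) (at x)"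
    "(f3 has_real_derivative d3) (at x)"
  shows "((\<lambda>x. vector [f1 x, f2 x, f3 x] :: real^3) has_vector_derivative vector [d1, d2, d3]) (at x)"
proof -
  let ?e1 = "vector [1, 0, 0] :: real^3" and ?e2 = "vector [0, 1, 0] :: real^3"
    and ?e3 = "vector [0, 0, 1] :: real^3"
  have split: "(vector [y1, y2, y3] :: real^3) = y1 *\<^sub>R ?e1 + y2 *\<^sub>R ?e2 + y3 *\<^sub>R ?e3" for y1 y2 y3
    by (simp add: vec_eq_iff forall_3)
  have "((\<lambda>x. f1 x *\<^sub>R ?e1 + f2 x *\<^sub>R ?e2 + f3 x *\<^sub>R ?e3) has_vector_derivative
      (f1 x *\<^sub>R 0 + d1 *\<^sub>R ?e1 + (f2 x *\<^sub>R 0 + d2 *\<^sub>R ?e2) + (f3 x *\<^sub>R 0 + d3 *\<^sub>R ?e3))) (at x)"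
    by (intro derivative_intros assms)
  then show ?thesis by (simp add: split[symmetric])
qed

lemma inner_vector3:
  "(vector [x1, x2, x3] :: real^3) \<bullet> vector [y1, y2, y3] = x1 * y1 + x2 * y2 + x3 * y3"
  by (simp add: inner_vec_def sum_3)

lemma cross3_vector3:
  "cross3 (vector [x1, x2, x3]) (vector [y1, y2, y3]) =
   vector [x2 * y3 - x3 * y2, x3 * y1 - x1 * y3, x1 * y2 - x2 * y1]"
  by (simp add: cross3_def vec_eq_iff forall_3)

lemma smooth_on_real_derivs:
  assumes "smooth_on_real I f" "s \<in> I"
  shows "(f has_real_derivative deriv f s) (at s)"
    "(deriv f has_real_derivative deriv (deriv f) s) (at s)"
proof -
  have "((deriv ^^ 0) f) differentiable (at s)" "((deriv ^^ 1) f) differentiable (at s)"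
    using assms unfolding smooth_on_real_def by blast+
  then show "(f has_real_derivative deriv f s) (at s)"
    "(deriv f has_real_derivative deriv (deriv f) s) (at s)"
    by (simp_all add: DERIV_deriv_iff_real_differentiable)
qed

lemma circle_param_first_derivs:
  fixes a b r :: "real \<Rightarrow> real" and X :: "real \<Rightarrow> real \<Rightarrow> real^3"
  assumes smooth: "smooth_on_real I a" "smooth_on_real I b" "smooth_on_real I r"
    and X_def: "X = (\<lambda>s t. vector [a s + r s * cos t, b s + r s * sin t, s])"
  shows "s \<in> I \<Longrightarrow>
      d_s X s t = vector [deriv a s + deriv r s * cos t, deriv b s + deriv r s * sin t, 1]"
    and "d_t X s t = vector [- r s * sin t, r s * cos t, 0]"
proof -
  assume s: "s \<in> I"
  note D = smooth_on_real_derivs[OF smooth(1) s] smooth_on_real_derivs[OF smooth(2) s]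
    smooth_on_real_derivs[OF smooth(3) s]
  have "((\<lambda>\<sigma>. X \<sigma> t) has_vector_derivative
      vector [deriv a s + deriv r s * cos t, deriv b s + deriv r s * sin t, 1]) (at s)"
    unfolding X_def by (intro vector3_has_vector_derivative derivative_eq_intros D refl) (auto intro: D)
  then show "d_s X s t = vector [deriv a s + deriv r s * cos t, deriv b s + deriv r s * sin t, 1]"
    unfolding d_s_def by (rule vector_derivative_at)
next
  have "((\<lambda>\<tau>. X s \<tau>) has_vector_derivative vector [- r s * sin t, r s * cos t, 0]) (at t)"
    unfolding X_def by (intro vector3_has_vector_derivative derivative_eq_intros refl) auto
  then show "d_t X s t = vector [- r s * sin t, r s * cos t, 0]"
    unfolding d_t_def by (rule vector_derivative_at)
qed

(* Second partial derivatives; X_ss needs the first-order formula on a whole neighbourhood of s. *)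
lemma circle_param_second_derivs:
  fixes a b r :: "real \<Rightarrow> real" and X :: "real \<Rightarrow> real \<Rightarrow> real^3"
  assumes I: "open I" and s: "s \<in> I"
    and smooth: "smooth_on_real I a" "smooth_on_real I b" "smooth_on_real I r"
    and X_def: "X = (\<lambda>s t. vector [a s + r s * cos t, b s + r s * sin t, s])"
  shows "d_s (d_s X) s t = vector [deriv (deriv a) s + deriv (deriv r) s * cos t,
                                   deriv (deriv b) s + deriv (deriv r) s * sin t, 0]"
    and "d_t (d_s X) s t = vector [- deriv r s * sin t, deriv r s * cos t, 0]"
    and "d_t (d_t X) s t = vector [- r s * cos t, - r s * sin t, 0]"
proof -
  note first = circle_param_first_derivs[OF smooth X_def]
  note D = smooth_on_real_derivs[OF smooth(1) s] smooth_on_real_derivs[OF smooth(2) s]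
    smooth_on_real_derivs[OF smooth(3) s]
  have "((\<lambda>\<sigma>. vector [deriv a \<sigma> + deriv r \<sigma> * cos t, deriv b \<sigma> + deriv r \<sigma> * sin t, 1] :: real^3)
      has_vector_derivative vector [deriv (deriv a) s + deriv (deriv r) s * cos t,
                                    deriv (deriv b) s + deriv (deriv r) s * sin t, 0]) (at s)"
    by (intro vector3_has_vector_derivative derivative_eq_intros D refl) (auto intro: D)
  then have "((\<lambda>\<sigma>. d_s X \<sigma> t) has_vector_derivative vector [deriv (deriv a) s + deriv (deriv r) s * cos t,
      deriv (deriv b) s + deriv (deriv r) s * sin t, 0]) (at s)"
    by (rule has_vector_derivative_transform_within_open[OF _ I s]) (simp add: first(1))
  then show "d_s (d_s X) s t = vector [deriv (deriv a) s + deriv (deriv r) s * cos t,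
      deriv (deriv b) s + deriv (deriv r) s * sin t, 0]"
    unfolding d_s_def[of "d_s X"] by (rule vector_derivative_at)
  have "((\<lambda>\<tau>. d_s X s \<tau>) has_vector_derivative vector [- deriv r s * sin t, deriv r s * cos t, 0]) (at t)"
    unfolding first(1)[OF s] by (intro vector3_has_vector_derivative derivative_eq_intros refl) auto
  then show "d_t (d_s X) s t = vector [- deriv r s * sin t, deriv r s * cos t, 0]"
    unfolding d_t_def[of "d_s X"] by (rule vector_derivative_at)
  have "((\<lambda>\<tau>. d_t X s \<tau>) has_vector_derivative vector [- r s * cos t, - r s * sin t, 0]) (at t)"
    unfolding first(2) by (intro vector3_has_vector_derivative derivative_eq_intros refl) auto
  then show "d_t (d_t X) s t = vector [- r s * cos t, - r s * sin t, 0]"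
    unfolding d_t_def[of "d_t X"] by (rule vector_derivative_at)
qed

lemma mean_curvature_clear_denominators:
  fixes \<rho> W q p M :: real
  assumes "\<rho> > 0" "W > 0" "W^2 = 1 + q^2"
  shows "2 * \<rho> * W^3 * ((- M / W * \<rho>^2 + \<rho> / W * (1 + q^2 + p^2)) / (2 * (\<rho>^2 * W^2)) - 1/2 * (q / W))
    = 1 + q^2 + p^2 - \<rho> * M - \<rho> * q * (1 + q^2)"
proof -
  have "(- M / W * \<rho>^2 + \<rho> / W * (1 + q^2 + p^2)) / (2 * (\<rho>^2 * W^2)) - 1/2 * (q / W) =
      (1 + q^2 + p^2 - \<rho> * M) / (2 * \<rho> * W^3) - q / (2 * W)"
    using assms(1,2) by (simp add: field_simps power2_eq_square power3_eq_cube)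
  also have "2 * \<rho> * W^3 * \<dots> = 1 + q^2 + p^2 - \<rho> * M - \<rho> * q * W^2"
    using assms(1,2) by (simp add: field_simps power2_eq_square power3_eq_cube)
  finally show ?thesis unfolding assms(3) .
qed

(* The key computation: with W = sqrt (1 + q^2) the unit normal is (-cos t, -sin t, q) / W,
   E G - F^2 = r^2 W^2, and 2 r W^3 H_phi equals the numerator L at (1, cos t, sin t). *)
lemma phi_mean_curv_formula:
  fixes a b r :: "real \<Rightarrow> real" and X :: "real \<Rightarrow> real \<Rightarrow> real^3"
  assumes I: "open I" and s: "s \<in> I"
    and smooth: "smooth_on_real I a" "smooth_on_real I b" "smooth_on_real I r"
    and r: "r s > 0"
    and X_def: "X = (\<lambda>s t. vector [a s + r s * cos t, b s + r s * sin t, s])"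
  shows "2 * r s * sqrt (hphi_den (deriv a s) (deriv b s) (deriv r s) 1 (cos t) (sin t)) ^ 3
      * phi_mean_curv X s t =
    hphi_num (deriv a s) (deriv b s) (deriv r s) (deriv (deriv a) s) (deriv (deriv b) s) (deriv (deriv r) s)
      (r s) 1 (cos t) (sin t)"
proof -
  define A B R where "A = deriv a s" and "B = deriv b s" and "R = deriv r s"
  define A2 B2 R2 where "A2 = deriv (deriv a) s" and "B2 = deriv (deriv b) s" and "R2 = deriv (deriv r) s"
  define \<rho> C S where "\<rho> = r s" and "C = cos t" and "S = sin t"
  define q p M where "q = A * C + B * S + R" and "p = B * C - A * S" and "M = A2 * C + B2 * S + R2"
  define W where "W = sqrt (1 + q^2)"
  have CS: "C^2 + S^2 = 1" unfolding C_def S_def by simp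
  have W: "W > 0" "W^2 = 1 + q^2" unfolding W_def by (simp_all add: add_pos_nonneg)
  note first = circle_param_first_derivs[OF smooth X_def]
  note second = circle_param_second_derivs[OF I s smooth X_def]
  have Xs: "d_s X s t = vector [A + R * C, B + R * S, 1]"
    and Xt: "d_t X s t = vector [- \<rho> * S, \<rho> * C, 0]"
    using first(1)[OF s] first(2) unfolding A_def B_def R_def \<rho>_def C_def S_def by simp_all
  have Xss: "d_s (d_s X) s t = vector [A2 + R2 * C, B2 + R2 * S, 0]"
    and Xst: "d_t (d_s X) s t = vector [- R * S, R * C, 0]"
    and Xtt: "d_t (d_t X) s t = vector [- \<rho> * C, - \<rho> * S, 0]"
    using second unfolding A2_def B2_def R2_def R_def \<rho>_def C_def S_def by simp_all
  have cross: "cross3 (d_s X s t) (d_t X s t) = vector [- \<rho> * C, - \<rho> * S, \<rho> * q]"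
    unfolding Xs Xt cross3_vector3 q_def
    using CS by (simp add: vec_eq_iff forall_3; algebra)
  have "norm (cross3 (d_s X s t) (d_t X s t)) = sqrt (\<rho>^2 * (1 + q^2))"
    unfolding cross norm_eq_sqrt_inner inner_vector3 by (rule arg_cong[where f=sqrt]) (use CS in algebra)
  also have "\<dots> = \<rho> * W" unfolding W_def \<rho>_def using r by (simp add: real_sqrt_mult)
  finally have N: "unit_normal X s t = vector [- C / W, - S / W, q / W]"
    unfolding unit_normal_def cross using r W(1) \<rho>_def by (simp add: vec_eq_iff forall_3)
  have E: "d_s X s t \<bullet> d_s X s t = 1 + q^2 + p^2"
    unfolding Xs inner_vector3 q_def p_def using CS by algebra
  have F: "d_s X s t \<bullet> d_t X s t = \<rho> * p"
    unfolding Xs Xt inner_vector3 p_def by (simp add: algebra_simps)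
  have G: "d_t X s t \<bullet> d_t X s t = \<rho>^2"
    unfolding Xt inner_vector3 using CS by algebra
  have e: "d_s (d_s X) s t \<bullet> unit_normal X s t = - M / W"
    unfolding Xss N inner_vector3 M_def using CS by (simp add: field_simps; algebra)
  have f: "d_t (d_s X) s t \<bullet> unit_normal X s t = 0"
    unfolding Xst N inner_vector3 by (simp add: field_simps)
  have g: "d_t (d_t X) s t \<bullet> unit_normal X s t = \<rho> / W"
    unfolding Xtt N inner_vector3 using CS by (simp add: field_simps; algebra)
  have "(1 + q^2 + p^2) * \<rho>^2 - (\<rho> * p)^2 = \<rho>^2 * W^2"
    using W(2) by (simp add: algebra_simps power2_eq_square)
  then have "phi_mean_curv X s t =
      (- M / W * \<rho>^2 + \<rho> / W * (1 + q^2 + p^2)) / (2 * (\<rho>^2 * W^2)) - 1/2 * (q / W)"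
    unfolding phi_mean_curv_def mean_curv_def Let_def E F G e f g by (simp add: N)
  then have "2 * \<rho> * W^3 * phi_mean_curv X s t = 1 + q^2 + p^2 - \<rho> * M - \<rho> * q * (1 + q^2)"
    using mean_curvature_clear_denominators[of \<rho> W q] r W unfolding \<rho>_def by simp
  moreover have "hphi_den A B R 1 C S = 1 + q^2" unfolding hphi_den_def q_def by simp
  moreover have "hphi_num A B R A2 B2 R2 \<rho> 1 C S = 1 + q^2 + p^2 - \<rho> * M - \<rho> * q * (1 + q^2)"
    unfolding hphi_num_def Let_def q_def p_def M_def by simp
  ultimately show ?thesis
    unfolding W_def A_def B_def R_def A2_def B2_def R2_def \<rho>_def C_def S_def by simp
qed

lemma half_angle_arctan:
  "(1 + x^2) * cos (2 * arctan x) = 1 - x^2" "(1 + x^2) * sin (2 * arctan x) = 2 * x"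
proof -
  have pos: "0 < 1 + x^2" by (simp add: add_pos_nonneg)
  have sq: "(sqrt (1 + x^2))^2 = 1 + x^2" using pos by simp
  show "(1 + x^2) * cos (2 * arctan x) = 1 - x^2"
    unfolding cos_double cos_arctan sin_arctan using pos by (simp add: power_divide sq field_simps)
  show "(1 + x^2) * sin (2 * arctan x) = 2 * x"
    unfolding sin_double cos_arctan sin_arctan using pos
    by (simp add: field_simps power2_eq_square[symmetric] sq)
qed

lemma exists_cos_ne_minus_one:
  fixes J :: "real set"
  assumes "open J" "J \<noteq> {}"
  obtains t where "t \<in> J" "cos t \<noteq> -1"
proof -
  obtain t0 where t0: "t0 \<in> J" using assms(2) by blast
  obtain e where e: "e > 0" "ball t0 e \<subseteq> J" using assms(1) t0 open_contains_ball by blast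
  show ?thesis
  proof (cases "cos t0 = -1")
    case True
    define \<delta> where "\<delta> = min e 1 / 2"
    have \<delta>: "0 < \<delta>" "\<delta> < e" "\<delta> < pi" using e pi_gt3 unfolding \<delta>_def by auto
    have "sin t0 = 0" using True sin_cos_squared_add[of t0] by simp
    then have "cos (t0 + \<delta>) = - cos \<delta>" using True by (simp add: cos_add)
    moreover have "cos \<delta> \<noteq> 1"
    proof
      assume "cos \<delta> = 1"
      then have "sin \<delta> = 0" using sin_cos_squared_add[of \<delta>] by simp
      with sin_gt_zero[of \<delta>] \<delta> show False by simp
    qed
    moreover have "t0 + \<delta> \<in> J" using e \<delta> by (auto simp: dist_real_def)
    ultimately show ?thesis using that by auto
  qed (use t0 that in auto)
qed

(* The half-angle parameters x = tan(t/2) of the angles t in an open nonempty set J form an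
   infinite set: they contain the open preimage of J under x |-> 2 arctan x + 2 pi k. *)
lemma infinite_half_angle_parameters:
  fixes J :: "real set"
  assumes "open J" "J \<noteq> {}"
  shows "infinite {x. \<exists>t\<in>J. (1 + x^2) * cos t = 1 - x^2 \<and> (1 + x^2) * sin t = 2 * x}"
    (is "infinite ?T")
proof -
  obtain t where t: "t \<in> J" "cos t \<noteq> -1" using exists_cos_ne_minus_one assms .
  define k where "k = \<lfloor>(t + pi) / (2 * pi)\<rfloor>"
  define \<theta> where "\<theta> = t - 2 * pi * of_int k"
  have "of_int k \<le> (t + pi) / (2 * pi)" "(t + pi) / (2 * pi) < of_int k + 1"
    unfolding k_def by linarith+
  then have "-pi \<le> \<theta>" "\<theta> < pi" unfolding \<theta>_def by (simp_all add: field_simps)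
  moreover have "cos \<theta> = cos t" unfolding \<theta>_def by (simp add: cos_diff)
  ultimately have \<theta>: "-pi < \<theta>" "\<theta> < pi" using t(2) by (auto simp: order_le_less)
  define U where "U = (\<lambda>x. 2 * arctan x + 2 * pi * of_int k) -` J"
  have "open U" unfolding U_def using assms(1) by (intro open_vimage continuous_intros)
  moreover have "2 * arctan (tan (\<theta> / 2)) + 2 * pi * of_int k = t"
    using \<theta> by (simp add: arctan_tan \<theta>_def field_simps)
  then have "tan (\<theta> / 2) \<in> U" using t(1) unfolding U_def by simp
  ultimately have "infinite U" using finite_imp_not_open by blast
  moreover have "U \<subseteq> ?T"
  proof
    fix x assume "x \<in> U"
    then show "x \<in> ?T" unfolding U_def
      by (intro CollectI bexI[of _ "2 * arctan x + 2 * pi * of_int k"])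
         (simp_all add: cos_add sin_add half_angle_arctan)
  qed
  ultimately show ?thesis using finite_subset by blast
qed

(* If p^2 = k h^3 with k <> 0 then every root of h has even order, since 2 ord p = 3 ord h. *)
lemma order_even_if_square_eq_cube:
  fixes p h :: "'a::idom poly"
  assumes eq: "p^2 = smult k (h^3)" and "k \<noteq> 0" "h \<noteq> 0"
  shows "even (order z h)"
proof -
  have "p \<noteq> 0" using eq assms(2,3) by auto
  then have "order z (p^2) = 2 * order z p" by (simp add: power2_eq_square order_mult)
  moreover have "order z (smult k (h^3)) = 3 * order z h"
    using assms(2,3) by (simp add: order_smult power3_eq_cube order_mult)
  ultimately have "2 * order z p = 3 * order z h" using eq by simp
  then show ?thesis by presburger
qed

lemma quadratic_simple_root:
  fixes c0 c1 c2 :: complex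
  assumes c2: "c2 \<noteq> 0" and disc: "c1^2 \<noteq> 4 * c0 * c2"
  obtains z where "poly [:c0, c1, c2:] z = 0" "order z [:c0, c1, c2:] = 1"
proof -
  define z where "z = (- c1 + csqrt (c1^2 - 4 * c0 * c2)) / (2 * c2)"
  have "(2 * c2 * z + c1)^2 = c1^2 - 4 * c0 * c2" unfolding z_def using c2 by (simp add: field_simps)
  then have "4 * c2 * (c0 + z * (c1 + z * c2)) = 0" by (simp add: algebra_simps power2_eq_square)
  then have root: "poly [:c0, c1, c2:] z = 0" using c2 by simp
  have "poly (pderiv [:c0, c1, c2:]) z \<noteq> 0"
  proof
    assume "poly (pderiv [:c0, c1, c2:]) z = 0"
    then have "c1 + 2 * c2 * z = 0" by (simp add: pderiv_pCons algebra_simps)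
    then have "z = - c1 / (2 * c2)" using c2 by (simp add: field_simps add_eq_0_iff)
    with root c2 show False using disc by (simp add: field_simps power2_eq_square)
  qed
  then have "order z [:c0, c1, c2:] = 1"
    using order_pderiv[of "[:c0, c1, c2:]" z] order_0I root c2 by auto
  with root that show ?thesis by blast
qed

definition half_angle_m :: "complex poly" where "half_angle_m = [:1, 0, 1:]"
definition half_angle_c :: "complex poly" where "half_angle_c = [:1, 0, -1:]"
definition half_angle_s :: "complex poly" where "half_angle_s = [:0, 2:]"

definition hphi_num_poly :: "real \<Rightarrow> real \<Rightarrow> real \<Rightarrow> real \<Rightarrow> real \<Rightarrow> real \<Rightarrow> real \<Rightarrow> complex poly" where
  "hphi_num_poly A B R A2 B2 R2 \<rho> =
     hphi_num [:of_real A:] [:of_real B:] [:of_real R:] [:of_real A2:] [:of_real B2:] [:of_real R2:]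
       [:of_real \<rho>:] half_angle_m half_angle_c half_angle_s"

definition hphi_den_poly :: "real \<Rightarrow> real \<Rightarrow> real \<Rightarrow> complex poly" where
  "hphi_den_poly A B R =
     hphi_den [:of_real A:] [:of_real B:] [:of_real R:] half_angle_m half_angle_c half_angle_s"

lemma poly_half_angle:
  "poly (hphi_num_poly A B R A2 B2 R2 \<rho>) (of_real x) =
     of_real (hphi_num A B R A2 B2 R2 \<rho> (1 + x^2) (1 - x^2) (2 * x))"
  "poly (hphi_den_poly A B R) (of_real x) = of_real (hphi_den A B R (1 + x^2) (1 - x^2) (2 * x))"
proof -
  have "poly half_angle_m (of_real x) = of_real (1 + x^2)" "poly half_angle_c (of_real x) = of_real (1 - x^2)"
    "poly half_angle_s (of_real x) = of_real (2 * x)"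
    unfolding half_angle_m_def half_angle_c_def half_angle_s_def by (simp_all add: power2_eq_square)
  then show "poly (hphi_num_poly A B R A2 B2 R2 \<rho>) (of_real x) =
      of_real (hphi_num A B R A2 B2 R2 \<rho> (1 + x^2) (1 - x^2) (2 * x))"
    "poly (hphi_den_poly A B R) (of_real x) = of_real (hphi_den A B R (1 + x^2) (1 - x^2) (2 * x))"
    unfolding hphi_num_poly_def hphi_den_poly_def
    by (simp_all add: poly_hphi_num poly_hphi_den of_real_hphi_num of_real_hphi_den)
qed

(* An identity between L^2 and k^2 U^3 at infinitely many half-angle points is an identity of
   polynomials, since a nonzero polynomial has only finitely many roots. *)
lemma half_angle_poly_identity:
  fixes A B R A2 B2 R2 \<rho> k :: real and X :: "real set"
  assumes X: "infinite X"
    and eq: "\<And>x. x \<in> X \<Longrightarrow>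
      hphi_num A B R A2 B2 R2 \<rho> (1 + x^2) (1 - x^2) (2 * x) ^ 2 =
      k^2 * hphi_den A B R (1 + x^2) (1 - x^2) (2 * x) ^ 3"
  shows "hphi_num_poly A B R A2 B2 R2 \<rho> ^ 2 = smult (of_real (k^2)) (hphi_den_poly A B R ^ 3)"
proof -
  define P where "P = hphi_num_poly A B R A2 B2 R2 \<rho> ^ 2 - smult (of_real (k^2)) (hphi_den_poly A B R ^ 3)"
  have "poly P (of_real x) = 0" if "x \<in> X" for x
    using eq[OF that] unfolding P_def by (simp add: poly_half_angle flip: of_real_power of_real_mult)
  then have "of_real ` X \<subseteq> {z. poly P z = 0}" by auto
  moreover have "infinite (of_real ` X :: complex set)"
    using X finite_imageD[of of_real X] inj_of_real by (metis inj_def inj_onI)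
  ultimately have "P = 0" using poly_roots_finite finite_subset by blast
  then show ?thesis unfolding P_def by simp
qed

(* The quadratic m + iQ, with Q = A c + B s + R m, always has nonzero discriminant. *)
lemma half_angle_factor_discriminant:
  fixes A B R :: real
  defines "c0 \<equiv> 1 + \<i> * of_real (A + R)" and "c1 \<equiv> \<i> * of_real (2 * B)" and "c2 \<equiv> 1 + \<i> * of_real (R - A)"
  shows "c1^2 \<noteq> 4 * c0 * c2"
proof
  assume "c1^2 = 4 * c0 * c2"
  moreover have "Re (c1^2) = - 4 * B^2" "Im (c1^2) = 0"
    unfolding c1_def by (simp_all add: power2_eq_square)
  moreover have "Re (4 * c0 * c2) = 4 * (1 + A^2 - R^2)" "Im (4 * c0 * c2) = 8 * R"
    unfolding c0_def c2_def by (simp_all add: algebra_simps power2_eq_square)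
  ultimately have "1 + A^2 + B^2 = 0" by simp
  moreover have "1 + A^2 + B^2 > 0" by (simp add: add_pos_nonneg)
  ultimately show False by simp
qed

(* Unless A = B = 0, the half-angle polynomial U = (m + iQ)(m - iQ) has a simple root: a simple
   root of m + iQ cannot be a root of m - iQ, since a common root z would satisfy m(z) = 0,
   i.e. z = i or z = -i, and Q(z) = 0, i.e. 2A + 2Bi = 0. *)
lemma hphi_den_poly_simple_root:
  fixes A B R :: real
  assumes AB: "\<not> (A = 0 \<and> B = 0)"
  obtains z where "hphi_den_poly A B R \<noteq> 0" "order z (hphi_den_poly A B R) = 1"
proof -
  define q where "q = [:of_real A:] * half_angle_c + [:of_real B:] * half_angle_s + [:of_real R:] * half_angle_m"
  define f where "f = half_angle_m + [:\<i>:] * q"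
  define g where "g = half_angle_m - [:\<i>:] * q"
  have D_fg: "hphi_den_poly A B R = f * g"
    unfolding hphi_den_poly_def f_def g_def q_def
    by (rule hphi_den_factor) (simp add: power2_eq_square one_pCons)
  define c0 where "c0 = 1 + \<i> * of_real (A + R)"
  define c1 where "c1 = \<i> * of_real (2 * B)"
  define c2 where "c2 = 1 + \<i> * of_real (R - A)"
  have f_coeffs: "f = [:c0, c1, c2:]"
    unfolding f_def q_def half_angle_m_def half_angle_c_def half_angle_s_def c0_def c1_def c2_def
    by (simp add: algebra_simps)
  have c2: "c2 \<noteq> 0" unfolding c2_def by (auto simp: complex_eq_iff)
  obtain z where fz: "poly f z = 0" and f_simple: "order z f = 1"
    using quadratic_simple_root[OF c2] half_angle_factor_discriminant unfolding f_coeffs c0_def c1_def c2_def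
    by blast
  have gz: "poly g z \<noteq> 0"
  proof
    assume gz: "poly g z = 0"
    have "2 * poly half_angle_m z = poly f z + poly g z" unfolding f_def g_def by simp
    then have "poly half_angle_m z = 0" using fz gz by simp
    then have "1 + z^2 = 0" unfolding half_angle_m_def by (simp add: power2_eq_square)
    then have "z^2 = \<i>^2" by (simp add: add_eq_0_iff)
    then have z: "z = \<i> \<or> z = - \<i>" by (metis power2_eq_iff)
    have "2 * \<i> * poly q z = poly f z - poly g z" unfolding f_def g_def by (simp add: algebra_simps)
    then have "poly q z = 0" using fz gz by simp
    with z have "A = 0 \<and> B = 0"
      unfolding q_def half_angle_m_def half_angle_c_def half_angle_s_def by (auto simp: complex_eq_iff)
    with AB show False ..
  qed
  have "f \<noteq> 0" "g \<noteq> 0" using c2 gz unfolding f_coeffs by auto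
  then have "hphi_den_poly A B R \<noteq> 0" "order z (hphi_den_poly A B R) = 1"
    using f_simple order_0I[OF gz] unfolding D_fg by (simp_all add: order_mult)
  then show ?thesis by (rule that)
qed

(* The algebraic heart of the proof: the identity L^2 = k^2 U^3 at infinitely many half-angle
   points, with k <> 0, forces A = B = 0, because otherwise U has a root of order one while
   every root of U has even order. *)
lemma centre_fixed_if_rational_identity:
  fixes A B R A2 B2 R2 \<rho> k :: real and X :: "real set"
  assumes k: "k \<noteq> 0" and X: "infinite X"
    and eq: "\<And>x. x \<in> X \<Longrightarrow>
      hphi_num A B R A2 B2 R2 \<rho> (1 + x^2) (1 - x^2) (2 * x) ^ 2 =
      k^2 * hphi_den A B R (1 + x^2) (1 - x^2) (2 * x) ^ 3"
  shows "A = 0 \<and> B = 0"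
proof (rule ccontr)
  assume "\<not> (A = 0 \<and> B = 0)"
  then obtain z where D: "hphi_den_poly A B R \<noteq> 0" and simple: "order z (hphi_den_poly A B R) = 1"
    by (rule hphi_den_poly_simple_root)
  have "even (order z (hphi_den_poly A B R))"
    using order_even_if_square_eq_cube[OF half_angle_poly_identity[OF X eq]] k D by simp
  with simple show False by simp
qed

(* The same conclusion from the identity at all angles of an open set, by homogeneity of L and U. *)
lemma centre_fixed_if_trig_identity:
  fixes A B R A2 B2 R2 \<rho> k :: real and J :: "real set"
  assumes k: "k \<noteq> 0" and J: "open J" "J \<noteq> {}"
    and eq: "\<And>t. t \<in> J \<Longrightarrow>
      hphi_num A B R A2 B2 R2 \<rho> 1 (cos t) (sin t) ^ 2 = k^2 * hphi_den A B R 1 (cos t) (sin t) ^ 3"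
  shows "A = 0 \<and> B = 0"
proof (rule centre_fixed_if_rational_identity[OF k infinite_half_angle_parameters[OF J]])
  fix x assume "x \<in> {x. \<exists>t\<in>J. (1 + x^2) * cos t = 1 - x^2 \<and> (1 + x^2) * sin t = 2 * x}"
  then obtain t where t: "t \<in> J" "(1 + x^2) * cos t = 1 - x^2" "(1 + x^2) * sin t = 2 * x" by blast
  define l where "l = 1 + x^2"
  have "hphi_num A B R A2 B2 R2 \<rho> l (1 - x^2) (2 * x) ^ 2 =
        (l^3)^2 * hphi_num A B R A2 B2 R2 \<rho> 1 (cos t) (sin t) ^ 2"
    using hphi_num_homogeneous[of A B R A2 B2 R2 \<rho> l 1 "cos t" "sin t"] t(2,3)
    by (simp add: l_def power_mult_distrib)
  also have "\<dots> = k^2 * ((l^2) * hphi_den A B R 1 (cos t) (sin t)) ^ 3"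
    using eq[OF t(1)] by (simp add: power_mult_distrib algebra_simps flip: power_mult)
  also have "\<dots> = k^2 * hphi_den A B R l (1 - x^2) (2 * x) ^ 3"
    using hphi_den_homogeneous[of A B R l 1 "cos t" "sin t"] t(2,3) by (simp add: l_def)
  finally show "hphi_num A B R A2 B2 R2 \<rho> (1 + x^2) (1 - x^2) (2 * x) ^ 2 =
      k^2 * hphi_den A B R (1 + x^2) (1 - x^2) (2 * x) ^ 3" by (simp add: l_def)
qed

lemma constant_if_deriv_zero:
  fixes f :: "real \<Rightarrow> real"
  assumes "is_interval I" "smooth_on_real I f" "\<And>s. s \<in> I \<Longrightarrow> deriv f s = 0"
  shows "\<exists>f0. \<forall>s\<in>I. f s = f0"
proof (rule has_field_derivative_zero_constant)
  show "convex I" using assms(1) by (simp add: is_interval_convex)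
  fix s assume s: "s \<in> I"
  show "(f has_field_derivative 0) (at s within I)"
    using smooth_on_real_derivs(1)[OF assms(2) s] assms(3)[OF s] by (simp add: has_field_derivative_at_within)
qed

theorem theorem6:
  fixes a b r :: "real \<Rightarrow> real" and I J :: "real set" and X :: "real \<Rightarrow> real \<Rightarrow> real^3"
  assumes I: "is_interval I" "open I" "I \<noteq> {}"
      and J: "is_interval J" "open J" "J \<noteq> {}"
      and smooth: "smooth_on_real I a" "smooth_on_real I b" "smooth_on_real I r"
      and rpos: "\<forall>s\<in>I. r s > 0"
      and X_def: "X = (\<lambda>s t. vector [a s + r s * cos t, b s + r s * sin t, s])"
      and Hconst: "\<exists>c. c \<noteq> 0 \<and> (\<forall>s\<in>I. \<forall>t\<in>J. phi_mean_curv X s t = c)"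
  shows "\<exists>a0 b0. \<forall>s\<in>I. a s = a0 \<and> b s = b0"
proof -
  obtain c where c: "c \<noteq> 0" "\<forall>s\<in>I. \<forall>t\<in>J. phi_mean_curv X s t = c" using Hconst by blast
  have centre_fixed: "deriv a s = 0 \<and> deriv b s = 0" if s: "s \<in> I" for s
  proof (rule centre_fixed_if_trig_identity[OF _ J(2,3)])
    show "2 * c * r s \<noteq> 0" using c(1) rpos s by fastforce
    fix t assume t: "t \<in> J"
    let ?D = "hphi_den (deriv a s) (deriv b s) (deriv r s) 1 (cos t) (sin t)"
    let ?N = "hphi_num (deriv a s) (deriv b s) (deriv r s) (deriv (deriv a) s) (deriv (deriv b) s)
      (deriv (deriv r) s) (r s) 1 (cos t) (sin t)"
    have "?N = 2 * c * r s * sqrt ?D ^ 3"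
      using phi_mean_curv_formula[OF I(2) s smooth _ X_def, of t] rpos s c(2) t by (simp add: ac_simps)
    then have "?N^2 = (2 * c * r s)^2 * (sqrt ?D ^ 2) ^ 3" by (simp add: power_mult_distrib flip: power_mult)
    then show "?N^2 = (2 * c * r s)^2 * ?D ^ 3" using hphi_den_nonneg by simp
  qed
  obtain a0 where "\<forall>s\<in>I. a s = a0" using constant_if_deriv_zero[OF I(1) smooth(1)] centre_fixed by blast
  moreover obtain b0 where "\<forall>s\<in>I. b s = b0" using constant_if_deriv_zero[OF I(1) smooth(2)] centre_fixed by blast
  ultimately show ?thesis by blast
qed

end
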